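(* Let $n\ge 1$ and let $\boldsymbol{\theta}\mapsto \ket{\phi(\boldsymbol{\theta})}$, $\boldsymbol{\theta}\in\mathbb{R}^m$, be any smooth map into normalized pure states of $n$ qubits (Hilbert space $\mathbb{C}^{2^n}$). For a unitary $U\in U(2^n)$ and $\boldsymbol{s}\in\{0,1\}^n$ let $p_{\boldsymbol{s}}^U(\boldsymbol{\theta}) := \bra{\phi(\boldsymbol{\theta})}U^{\dagger}\Pi_{\boldsymbol{s}}U\ket{\phi(\boldsymbol{\theta})}$, where $\Pi_{\boldsymbol{s}}=\ket{\boldsymbol{s}}\bra{\boldsymbol{s}}$ is the computational-basis projector. Then for all $\boldsymbol{\theta}$ and all $i,j\in\{1,\dots,m\}$, $$[\mathcal{F}_Q(\boldsymbol{\theta})]_{ij} = 2(2^n+1)\sum_{\boldsymbol{s}\in\{0,1\}^n}\mathbb{E}_{U\sim\mu_H}\left[\frac{\partial p_{\boldsymbol{s}}^U(\boldsymbol{\theta})}{\partial\theta_i}\frac{\partial p_{\boldsymbol{s}}^U(\boldsymbol{\theta})}{\partial\theta_j}\right],$$ where $\mu_H$ is the Haar probability measure on $U(2^n)$.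
   Context: The quantum Fisher information matrix (QFIM) of the parameterized pure state is the $m\times m$ real matrix with entries $$[\mathcal{F}_Q(\boldsymbol{\theta})]_{ij} = 4\,\mathrm{Re}\left[\frac{\partial\bra{\phi(\boldsymbol{\theta})}}{\partial\theta_i}\frac{\partial\ket{\phi(\boldsymbol{\theta})}}{\partial\theta_j} - \frac{\partial\bra{\phi(\boldsymbol{\theta})}}{\partial\theta_i}\ket{\phi(\boldsymbol{\theta})}\bra{\phi(\boldsymbol{\theta})}\frac{\partial\ket{\phi(\boldsymbol{\theta})}}{\partial\theta_j}\right],$$ equivalently twice the Hessian at $\boldsymbol{\epsilon}=0$ of the infidelity $1-|\langle\phi(\boldsymbol{\theta})|\phi(\boldsymbol{\theta}+\boldsymbol{\epsilon})\rangle|^2$ with respect to $\boldsymbol{\epsilon}$. *)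

theory Defs
  imports "HOL-Analysis.Analysis" "HOL-Probability.Probability"
begin

text \<open>Hilbert space of n qubits: complex^'d with CARD('d) = 2^n; the computational
basis vectors are indexed by the elements of 'd (a relabelling of {0,1}^n).\<close>

definition braket :: "complex^'d \<Rightarrow> complex^'d \<Rightarrow> complex" where
  "braket a b = (\<Sum>k\<in>UNIV. cnj (a $ k) * b $ k)"

definition cadj :: "complex^'d^'d \<Rightarrow> complex^'d^'d" where
  "cadj U = (\<chi> i j. cnj (U $ j $ i))"

definition unitary_group :: "(complex^'d^'d) set" where
  "unitary_group = {U. U ** cadj U = mat 1 \<and> cadj U ** U = mat 1}"

definition basis_proj :: "'d::finite \<Rightarrow> complex^'d^'d" where
  "basis_proj s = (\<chi> a b. if a = s \<and> b = s then 1 else 0)"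

definition partial :: "'m::finite \<Rightarrow> (real^'m \<Rightarrow> 'b::real_normed_vector) \<Rightarrow> real^'m \<Rightarrow> 'b" where
  "partial i g x = vector_derivative (\<lambda>t. g (x + t *\<^sub>R axis i 1)) (at 0)"

fun iter_partial :: "'m::finite list \<Rightarrow> (real^'m \<Rightarrow> 'b::real_normed_vector) \<Rightarrow> real^'m \<Rightarrow> 'b" where
  "iter_partial [] g = g"
| "iter_partial (i # is) g = partial i (iter_partial is g)"

definition smooth_map :: "(real^'m::finite \<Rightarrow> 'b::real_normed_vector) \<Rightarrow> bool" where
  "smooth_map g \<longleftrightarrow> (\<forall>is. continuous_on UNIV (iter_partial is g) \<and>
      (\<forall>i x. (\<lambda>t. iter_partial is g (x + t *\<^sub>R axis i 1)) differentiable (at 0)))"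

definition qfim :: "(real^'m::finite \<Rightarrow> complex^'d::finite) \<Rightarrow> real^'m \<Rightarrow> 'm \<Rightarrow> 'm \<Rightarrow> real" where
  "qfim \<phi> \<theta> i j = 4 * Re (braket (partial i \<phi> \<theta>) (partial j \<phi> \<theta>)
      - braket (partial i \<phi> \<theta>) (\<phi> \<theta>) * braket (\<phi> \<theta>) (partial j \<phi> \<theta>))"

definition outcome_prob :: "(real^'m::finite \<Rightarrow> complex^'d::finite) \<Rightarrow> complex^'d^'d \<Rightarrow> 'd \<Rightarrow> real^'m \<Rightarrow> real" where
  "outcome_prob \<phi> U s \<theta> = Re (braket (\<phi> \<theta>) ((cadj U ** basis_proj s ** U) *v \<phi> \<theta>))"

definition haar_unitary :: "(complex^'d::finite^'d) measure \<Rightarrow> bool" where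
  "haar_unitary \<mu> \<longleftrightarrow> prob_space \<mu> \<and> space \<mu> = unitary_group \<and>
     sets \<mu> = sets (restrict_space borel unitary_group) \<and>
     (\<forall>V\<in>unitary_group. \<forall>A\<in>sets \<mu>. measure \<mu> ((\<lambda>U. V ** U) ` A) = measure \<mu> A)"

end

theory Submission
  imports Defs
begin

(* Write x = phi theta, y = d_i phi, z = d_j phi and d = 2^n. Since p_s^U = |(U x)_s|^2, its
   derivative is 2 Re(conj (U x)_s (U y)_s), so the right-hand side is 8 (d + 1) times the Haar
   average of G(U) = sum_s Re(conj (U x)_s (U y)_s) Re(conj (U x)_s (U z)_s) (outcome_corr).
   Normalisation gives <x, x> = 1 and Re <x, y> = Re <x, z> = 0, which turns the QFIM into 4 K(x, y, z)
   for the unitarily invariant form K(x, y, z) = Re(2 <x, y> <x, z> + <x, y> <z, x> + <x, x> <z, y>)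
   (moment_form).

   The Haar average of G needs no Weingarten calculus. For basis states a \<noteq> b let H_ab and P_ab
   (hadamard, hadamard_phase) act on span{e_a, e_b} as [[1, 1], [1, -1]] / sqrt 2 and
   [[1, i], [1, -i]] / sqrt 2. Polarisation gives
     K(x, y, z) = 2 (d + 1) G(1) + sum_{a \<noteq> b} (G(H_ab) + G(P_ab) - 2 G(1)),
   and applied to U x, U y, U z this writes the constant K as 2 (d + 1) G(U) plus the terms
   G(H_ab U) + G(P_ab U) - 2 G(U), whose Haar integrals vanish by left invariance. Hence the average
   of G is K / (2 (d + 1)). Nothing depends on d being a power of two. *)

lemma sum_eq_single:
  fixes f :: "'d::finite \<Rightarrow> 'b::comm_monoid_add"
  assumes "\<And>k. k \<noteq> a \<Longrightarrow> f k = 0"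
  shows "sum f UNIV = f a"
  using assms by (simp add: sum.remove[of UNIV a])

lemma sum_eq_pair:
  fixes f :: "'d::finite \<Rightarrow> 'b::comm_monoid_add"
  assumes "a \<noteq> b" "\<And>k. k \<noteq> a \<Longrightarrow> k \<noteq> b \<Longrightarrow> f k = 0"
  shows "sum f UNIV = f a + f b"
  using assms by (simp add: sum.remove[of UNIV a] sum.remove[of "UNIV - {a}" b] Diff_insert[symmetric])

lemma sum_off_diagonal:
  fixes f :: "'d::finite \<Rightarrow> 'b::ab_group_add"
  shows "(\<Sum>b\<in>UNIV. if a = b then 0 else f b) = sum f UNIV - f a"
  by (simp add: sum.remove[of UNIV a] if_distrib cong: if_cong)

section \<open>Unitary group and Haar measure\<close>

lemma cadj_mult: "cadj (A ** B) = cadj B ** cadj (A :: complex^'d::finite^'d)"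
  by (simp add: vec_eq_iff cadj_def matrix_matrix_mult_def mult.commute)

lemma cadj_cadj [simp]: "cadj (cadj A) = A"
  by (simp add: vec_eq_iff cadj_def)

lemma unitary_group_cadj: "V \<in> unitary_group \<Longrightarrow> cadj V \<in> unitary_group"
  by (auto simp: unitary_group_def)

lemma unitary_group_mult:
  assumes "U \<in> unitary_group" "V \<in> unitary_group"
  shows "V ** U \<in> unitary_group"
proof -
  have "(V ** U) ** cadj (V ** U) = V ** (U ** cadj U) ** cadj V"
    and "cadj (V ** U) ** (V ** U) = cadj U ** (cadj V ** V) ** U"
    by (simp_all add: cadj_mult matrix_mul_assoc)
  with assms show ?thesis
    by (simp add: unitary_group_def)
qed

lemma unitary_cancel_left:
  assumes "V \<in> unitary_group"
  shows "cadj V ** (V ** U) = U" "V ** (cadj V ** U) = U"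
  using assms by (simp_all add: matrix_mul_assoc unitary_group_def)

lemma cnj_braket: "cnj (braket x y) = braket y x"
  by (simp add: braket_def mult.commute)

lemma Re_braket: "Re (braket x y) = inner x y"
  by (simp add: braket_def inner_vec_def inner_complex_def)

lemma braket_self: "braket x x = of_real ((norm x)\<^sup>2)"
  by (simp add: complex_eq_iff Re_braket power2_norm_eq_inner) (simp add: braket_def algebra_simps)

lemma braket_adj: "braket (A *v x) y = braket x (cadj A *v y)"
proof -
  have "braket (A *v x) y = (\<Sum>s\<in>UNIV. \<Sum>k\<in>UNIV. cnj (A$s$k) * cnj (x$k) * y$s)"
    by (simp add: braket_def matrix_vector_mult_def sum_distrib_right)
  also have "\<dots> = (\<Sum>k\<in>UNIV. \<Sum>s\<in>UNIV. cnj (A$s$k) * cnj (x$k) * y$s)"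
    by (rule sum.swap)
  also have "\<dots> = braket x (cadj A *v y)"
    by (simp add: braket_def matrix_vector_mult_def cadj_def sum_distrib_left mult_ac)
  finally show ?thesis .
qed

lemma braket_unitary: "U \<in> unitary_group \<Longrightarrow> braket (U *v x) (U *v y) = braket x y"
  by (simp add: braket_adj matrix_vector_mul_assoc unitary_group_def)

lemma norm_row_unitary:
  assumes "U \<in> unitary_group"
  shows "norm (U $ i) = 1"
proof -
  have "braket (U $ i) (U $ i) = (U ** cadj U) $ i $ i"
    by (simp add: braket_def matrix_matrix_mult_def cadj_def mult.commute)
  from arg_cong[OF this, of Re] assms have "(norm (U $ i))\<^sup>2 = 1"
    by (simp add: Re_braket power2_norm_eq_inner unitary_group_def mat_def)
  then show ?thesis
    using norm_ge_zero[of "U $ i"] by (auto simp: power2_eq_1_iff)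
qed

lemma compact_unitary_group: "compact (unitary_group :: (complex^'d::finite^'d) set)"
  unfolding compact_eq_bounded_closed
proof
  have "norm U \<le> real CARD('d)" if "U \<in> unitary_group" for U :: "complex^'d^'d"
  proof -
    have "norm U \<le> (\<Sum>i\<in>UNIV. norm (U $ i))"
      unfolding norm_vec_def by (rule L2_set_le_sum) simp
    with norm_row_unitary[OF that] show ?thesis
      by simp
  qed
  then show "bounded (unitary_group :: (complex^'d^'d) set)"
    by (auto simp: bounded_iff)
  have "continuous_on UNIV (\<lambda>U::complex^'d^'d. U ** cadj U)"
    and "continuous_on UNIV (\<lambda>U::complex^'d^'d. cadj U ** U)"
    unfolding matrix_matrix_mult_def cadj_def by (intro continuous_intros)+
  then show "closed (unitary_group :: (complex^'d^'d) set)"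
    unfolding unitary_group_def by (intro closed_Collect_conj closed_Collect_eq continuous_on_const)
qed

lemma measurable_haar:
  assumes "haar_unitary \<mu>" "f \<in> borel_measurable borel"
  shows "f \<in> borel_measurable \<mu>"
  using measurable_restrict_space1[OF assms(2)] assms(1)
  by (metis haar_unitary_def measurable_cong_sets)

lemma integrable_haar_continuous:
  fixes f :: "complex^'d::finite^'d \<Rightarrow> real"
  assumes H: "haar_unitary \<mu>" and f: "continuous_on UNIV f"
  shows "integrable \<mu> f"
proof -
  have "compact (f ` unitary_group)"
    by (rule compact_continuous_image[OF continuous_on_subset[OF f] compact_unitary_group]) simp
  then obtain B where "\<forall>y\<in>f ` unitary_group. norm y \<le> B"
    by (meson bounded_iff compact_imp_bounded)
  then have B: "\<And>U. U \<in> unitary_group \<Longrightarrow> norm (f U) \<le> B"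
    by blast
  have "finite_measure \<mu>"
    using H by (simp add: haar_unitary_def prob_space.axioms(1))
  then show ?thesis
    by (rule finite_measure.integrable_const_bound[where B = B])
      (use H B in \<open>auto intro!: measurable_haar borel_measurable_continuous_onI f
        simp: haar_unitary_def\<close>)
qed

lemma measurable_haar_left_mult:
  fixes V :: "complex^'d::finite^'d"
  assumes H: "haar_unitary \<mu>" and V: "V \<in> unitary_group"
  shows "(\<lambda>U. V ** U) \<in> \<mu> \<rightarrow>\<^sub>M \<mu>"
proof -
  have "continuous_on UNIV (\<lambda>U. V ** (U :: complex^'d^'d))"
    unfolding matrix_matrix_mult_def by (intro continuous_intros)
  then have "(\<lambda>U. V ** U) \<in> restrict_space borel unitary_group \<rightarrow>\<^sub>M restrict_space borel unitary_group"
    by (intro measurable_restrict_space3)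
      (auto intro: borel_measurable_continuous_onI unitary_group_mult V)
  with H show ?thesis
    by (metis haar_unitary_def measurable_cong_sets)
qed

lemma vimage_left_mult_unitary:
  assumes V: "V \<in> unitary_group" and A: "A \<subseteq> unitary_group"
  shows "(\<lambda>U. V ** U) -` A \<inter> unitary_group = (\<lambda>U. cadj V ** U) ` A"
proof
  show "(\<lambda>U. V ** U) -` A \<inter> unitary_group \<subseteq> (\<lambda>U. cadj V ** U) ` A"
    by (auto simp: image_iff) (metis unitary_cancel_left(1)[OF V])
  show "(\<lambda>U. cadj V ** U) ` A \<subseteq> (\<lambda>U. V ** U) -` A \<inter> unitary_group"
    using A by (auto simp: unitary_cancel_left(2)[OF V] intro: unitary_group_mult unitary_group_cadj V)
qed

lemma distr_haar_left_mult:
  assumes H: "haar_unitary \<mu>" and V: "V \<in> unitary_group"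
  shows "distr \<mu> \<mu> (\<lambda>U. V ** U) = \<mu>"
proof (rule measure_eqI)
  fix A
  assume "A \<in> sets (distr \<mu> \<mu> (\<lambda>U. V ** U))"
  then have A: "A \<in> sets \<mu>"
    by simp
  have space: "space \<mu> = unitary_group" and fin: "finite_measure \<mu>"
    using H by (simp_all add: haar_unitary_def prob_space.axioms(1))
  have "emeasure (distr \<mu> \<mu> (\<lambda>U. V ** U)) A = emeasure \<mu> ((\<lambda>U. cadj V ** U) ` A)"
    using sets.sets_into_space[OF A]
    by (simp add: emeasure_distr[OF measurable_haar_left_mult[OF H V] A] space vimage_left_mult_unitary[OF V])
  also have "\<dots> = emeasure \<mu> A"
    using H A unitary_group_cadj[OF V]
    by (simp add: haar_unitary_def finite_measure.emeasure_eq_measure[OF fin])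
  finally show "emeasure (distr \<mu> \<mu> (\<lambda>U. V ** U)) A = emeasure \<mu> A" .
qed simp

lemma integral_haar_left_mult:
  fixes f :: "complex^'d::finite^'d \<Rightarrow> real"
  assumes H: "haar_unitary \<mu>" and V: "V \<in> unitary_group" and f: "f \<in> borel_measurable borel"
  shows "(\<integral>U. f (V ** U) \<partial>\<mu>) = (\<integral>U. f U \<partial>\<mu>)"
  using integral_distr[OF measurable_haar_left_mult[OF H V] measurable_haar[OF H f]]
  by (simp add: distr_haar_left_mult[OF H V])

section \<open>Two-level unitaries\<close>

definition two_level :: "'d \<Rightarrow> 'd \<Rightarrow> complex \<Rightarrow> complex \<Rightarrow> complex \<Rightarrow> complex \<Rightarrow> complex^'d^'d" where
  "two_level a b u11 u12 u21 u22 = (\<chi> i j.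
     if i = a then (if j = a then u11 else if j = b then u12 else 0)
     else if i = b then (if j = a then u21 else if j = b then u22 else 0)
     else if i = j then 1 else 0)"

lemma two_level_mult_vec:
  assumes "a \<noteq> b"
  shows "(two_level a b u11 u12 u21 u22 *v x) $ i =
    (if i = a then u11 * x$a + u12 * x$b else if i = b then u21 * x$a + u22 * x$b else x$i)"
proof (cases "i = a \<or> i = b")
  case True
  with assms show ?thesis
    unfolding matrix_vector_mult_def vec_lambda_beta by (subst sum_eq_pair[OF assms]) (auto simp: two_level_def)
next
  case False
  then show ?thesis
    unfolding matrix_vector_mult_def vec_lambda_beta by (subst sum_eq_single[where a = i]) (auto simp: two_level_def)
qed

lemma two_level_unitary:
  assumes ab: "a \<noteq> b"
    and r1: "cnj u11 * u11 + cnj u12 * u12 = 1" and r2: "cnj u21 * u21 + cnj u22 * u22 = 1"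
    and c1: "cnj u11 * u11 + cnj u21 * u21 = 1" and c2: "cnj u12 * u12 + cnj u22 * u22 = 1"
    and r12: "u11 * cnj u21 + u12 * cnj u22 = 0" and c12: "cnj u11 * u12 + cnj u21 * u22 = 0"
  shows "two_level a b u11 u12 u21 u22 \<in> unitary_group"
proof -
  let ?V = "two_level a b u11 u12 u21 u22"
  have r21: "u21 * cnj u11 + u22 * cnj u12 = 0" and c21: "cnj u12 * u11 + cnj u22 * u21 = 0"
    using arg_cong[OF r12, of cnj] arg_cong[OF c12, of cnj] by (simp_all add: mult.commute)
  have "(?V ** cadj ?V) $ i $ j = mat 1 $ i $ j" for i j
  proof (cases "i = a \<or> i = b")
    case True
    with ab r1 r2 r12 r21 show ?thesis
      unfolding matrix_matrix_mult_def cadj_def vec_lambda_beta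
      by (subst sum_eq_pair[OF ab]) (auto simp: two_level_def mat_def mult.commute)
  next
    case False
    then show ?thesis
      unfolding matrix_matrix_mult_def cadj_def vec_lambda_beta
      by (subst sum_eq_single[where a = i]) (auto simp: two_level_def mat_def)
  qed
  moreover have "(cadj ?V ** ?V) $ i $ j = mat 1 $ i $ j" for i j
  proof (cases "i = a \<or> i = b")
    case True
    with ab c1 c2 c12 c21 show ?thesis
      unfolding matrix_matrix_mult_def cadj_def vec_lambda_beta
      by (subst sum_eq_pair[OF ab]) (auto simp: two_level_def mat_def mult.commute)
  next
    case False
    then show ?thesis
      unfolding matrix_matrix_mult_def cadj_def vec_lambda_beta
      by (subst sum_eq_single[where a = i]) (auto simp: two_level_def mat_def)
  qed
  ultimately show ?thesis
    by (simp add: unitary_group_def vec_eq_iff)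
qed

definition inv_sqrt2 :: complex where
  "inv_sqrt2 = complex_of_real (1 / sqrt 2)"

lemma cnj_inv_sqrt2 [simp]: "cnj inv_sqrt2 = inv_sqrt2"
  by (simp add: inv_sqrt2_def)

lemma inv_sqrt2_squared: "inv_sqrt2 * inv_sqrt2 = 1 / 2"
  by (simp add: inv_sqrt2_def flip: of_real_mult)

definition hadamard :: "'d \<Rightarrow> 'd \<Rightarrow> complex^'d^'d" where
  "hadamard a b = two_level a b inv_sqrt2 inv_sqrt2 inv_sqrt2 (- inv_sqrt2)"

definition hadamard_phase :: "'d \<Rightarrow> 'd \<Rightarrow> complex^'d^'d" where
  "hadamard_phase a b = two_level a b inv_sqrt2 (\<i> * inv_sqrt2) inv_sqrt2 (- \<i> * inv_sqrt2)"

lemma hadamard_unitary: "a \<noteq> b \<Longrightarrow> hadamard a b \<in> unitary_group"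
  unfolding hadamard_def by (rule two_level_unitary) (simp_all add: inv_sqrt2_squared)

lemma hadamard_phase_unitary: "a \<noteq> b \<Longrightarrow> hadamard_phase a b \<in> unitary_group"
  unfolding hadamard_phase_def by (rule two_level_unitary) (simp_all add: algebra_simps inv_sqrt2_squared)

section \<open>Haar average of the outcome correlation\<close>

definition corr_term :: "complex \<Rightarrow> complex \<Rightarrow> complex \<Rightarrow> real" where
  "corr_term p q r = Re (cnj p * q) * Re (cnj p * r)"

definition outcome_corr :: "complex^'d^'d \<Rightarrow> complex^'d \<Rightarrow> complex^'d \<Rightarrow> complex^'d \<Rightarrow> real" where
  "outcome_corr W x y z = (\<Sum>s\<in>UNIV. corr_term ((W *v x) $ s) ((W *v y) $ s) ((W *v z) $ s))"

definition moment_term :: "complex \<Rightarrow> complex \<Rightarrow> complex \<Rightarrow> complex \<Rightarrow> complex \<Rightarrow> complex \<Rightarrow> real" where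
  "moment_term p q r p' q' r' =
     Re (2 * (cnj p * q) * (cnj p' * r') + (cnj p * q) * (cnj r' * p') + (cnj p * p) * (cnj r' * q'))"

definition moment_form :: "complex^'d \<Rightarrow> complex^'d \<Rightarrow> complex^'d \<Rightarrow> real" where
  "moment_form x y z = Re (2 * braket x y * braket x z + braket x y * braket z x + braket x x * braket z y)"

lemma corr_term_polarization:
  "corr_term (p1 + p2) (q1 + q2) (r1 + r2) + corr_term (p1 - p2) (q1 - q2) (r1 - r2)
   + corr_term (p1 + \<i> * p2) (q1 + \<i> * q2) (r1 + \<i> * r2) + corr_term (p1 - \<i> * p2) (q1 - \<i> * q2) (r1 - \<i> * r2)
   = 4 * (corr_term p1 q1 r1 + corr_term p2 q2 r2)
     + 2 * (moment_term p1 q1 r1 p2 q2 r2 + moment_term p2 q2 r2 p1 q1 r1)"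
  by (simp add: corr_term_def moment_term_def algebra_simps power2_eq_square)

lemma moment_term_diagonal: "moment_term p q r p q r = 4 * corr_term p q r"
  by (simp add: moment_term_def corr_term_def algebra_simps power2_eq_square)

lemma corr_term_inv_sqrt2:
  "corr_term (inv_sqrt2 * p) (inv_sqrt2 * q) (inv_sqrt2 * r) = corr_term p q r / 4"
proof -
  have scale: "cnj (inv_sqrt2 * p) * (inv_sqrt2 * q) = 1 / 2 * (cnj p * q)" for p q
    unfolding inv_sqrt2_squared[symmetric] by (simp add: mult_ac)
  show ?thesis
    unfolding corr_term_def scale by simp
qed

lemma outcome_corr_two_level:
  assumes "a \<noteq> b"
  shows "outcome_corr (two_level a b u11 u12 u21 u22) x y z = outcome_corr (mat 1) x y z
     - corr_term (x$a) (y$a) (z$a) - corr_term (x$b) (y$b) (z$b)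
     + corr_term (u11 * x$a + u12 * x$b) (u11 * y$a + u12 * y$b) (u11 * z$a + u12 * z$b)
     + corr_term (u21 * x$a + u22 * x$b) (u21 * y$a + u22 * y$b) (u21 * z$a + u22 * z$b)"
proof -
  let ?V = "two_level a b u11 u12 u21 u22"
  have "outcome_corr ?V x y z - outcome_corr (mat 1) x y z
      = (\<Sum>s\<in>UNIV. corr_term ((?V *v x) $ s) ((?V *v y) $ s) ((?V *v z) $ s)
                   - corr_term (x $ s) (y $ s) (z $ s))"
    by (simp add: outcome_corr_def sum_subtractf)
  also have "\<dots> = corr_term (u11 * x$a + u12 * x$b) (u11 * y$a + u12 * y$b) (u11 * z$a + u12 * z$b)
       - corr_term (x$a) (y$a) (z$a)
     + (corr_term (u21 * x$a + u22 * x$b) (u21 * y$a + u22 * y$b) (u21 * z$a + u22 * z$b)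
       - corr_term (x$b) (y$b) (z$b))"
    using assms by (subst sum_eq_pair[OF assms]) (auto simp: two_level_mult_vec)
  finally show ?thesis
    by simp
qed

lemma outcome_corr_hadamard_pair:
  assumes "a \<noteq> b"
  shows "outcome_corr (hadamard a b) x y z + outcome_corr (hadamard_phase a b) x y z - 2 * outcome_corr (mat 1) x y z
    = (moment_term (x$a) (y$a) (z$a) (x$b) (y$b) (z$b) + moment_term (x$b) (y$b) (z$b) (x$a) (y$a) (z$a)) / 2
      - corr_term (x$a) (y$a) (z$a) - corr_term (x$b) (y$b) (z$b)"
proof -
  have factor: "inv_sqrt2 * p + inv_sqrt2 * q = inv_sqrt2 * (p + q)"
     "inv_sqrt2 * p + - inv_sqrt2 * q = inv_sqrt2 * (p - q)"
     "inv_sqrt2 * p + \<i> * inv_sqrt2 * q = inv_sqrt2 * (p + \<i> * q)"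
     "inv_sqrt2 * p + - \<i> * inv_sqrt2 * q = inv_sqrt2 * (p - \<i> * q)" for p q
    by (simp_all add: algebra_simps)
  show ?thesis
    unfolding hadamard_def hadamard_phase_def outcome_corr_two_level[OF assms] factor corr_term_inv_sqrt2
    using corr_term_polarization[of "x$a" "x$b" "y$a" "y$b" "z$a" "z$b"]
    by (simp add: algebra_simps)
qed

lemma moment_form_eq_sum:
  "moment_form x y z = (\<Sum>a\<in>UNIV. \<Sum>b\<in>UNIV. moment_term (x$a) (y$a) (z$a) (x$b) (y$b) (z$b))"
proof -
  have "moment_form x y z = Re (\<Sum>a\<in>UNIV. \<Sum>b\<in>UNIV. 2 * (cnj (x$a) * y$a) * (cnj (x$b) * z$b)
     + (cnj (x$a) * y$a) * (cnj (z$b) * x$b) + (cnj (x$a) * x$a) * (cnj (z$b) * y$b))"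
    unfolding moment_form_def braket_def mult.assoc[of 2] sum_product
    by (simp only: sum.distrib sum_distrib_left mult.assoc)
  then show ?thesis
    by (simp add: moment_term_def)
qed

lemma moment_form_eq_two_level_sum:
  fixes x y z :: "complex^'d::finite"
  shows "moment_form x y z = 2 * (real CARD('d) + 1) * outcome_corr (mat 1) x y z
     + (\<Sum>a\<in>UNIV. \<Sum>b\<in>UNIV. if a = b then 0 else
          outcome_corr (hadamard a b) x y z + outcome_corr (hadamard_phase a b) x y z
          - 2 * outcome_corr (mat 1) x y z)"
proof -
  define c where "c a = corr_term (x$a) (y$a) (z$a)" for a
  define K where "K a b = (if a = b then 0 else moment_term (x$a) (y$a) (z$a) (x$b) (y$b) (z$b))" for a b
  have "(\<Sum>a\<in>UNIV. \<Sum>b\<in>UNIV. if a = b then 0 else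
          outcome_corr (hadamard a b) x y z + outcome_corr (hadamard_phase a b) x y z
          - 2 * outcome_corr (mat 1) x y z)
     = (\<Sum>a\<in>UNIV. \<Sum>b\<in>UNIV. K a b / 2 + K b a / 2
          - (if a = b then 0 else c a) - (if a = b then 0 else c b))"
    by (intro sum.cong refl) (simp add: outcome_corr_hadamard_pair K_def c_def)
  also have "\<dots> = (\<Sum>a\<in>UNIV. \<Sum>b\<in>UNIV. K a b) - 2 * (real CARD('d) - 1) * sum c UNIV"
  proof -
    have "(\<Sum>a\<in>UNIV. \<Sum>b\<in>UNIV. K b a) = (\<Sum>a\<in>UNIV. \<Sum>b\<in>UNIV. K a b)"
      by (rule sum.swap)
    moreover have "(\<Sum>a\<in>UNIV. \<Sum>b\<in>UNIV. if a = b then 0 else c a) = (real CARD('d) - 1) * sum c UNIV"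
      by (simp add: sum_off_diagonal sum_subtractf sum_distrib_right algebra_simps)
    moreover have "(\<Sum>a\<in>UNIV. \<Sum>b\<in>UNIV. if a = b then 0 else c b) = (real CARD('d) - 1) * sum c UNIV"
      by (simp add: sum_off_diagonal sum_subtractf algebra_simps)
    ultimately show ?thesis
      by (simp add: sum.distrib sum_subtractf flip: sum_divide_distrib)
  qed
  also have "(\<Sum>a\<in>UNIV. \<Sum>b\<in>UNIV. K a b) = moment_form x y z - 4 * sum c UNIV"
    by (simp add: K_def sum_off_diagonal sum_subtractf moment_form_eq_sum moment_term_diagonal
        c_def sum_distrib_left)
  finally show ?thesis
    by (simp add: outcome_corr_def c_def algebra_simps)
qed

lemma moment_form_unitary:
  "U \<in> unitary_group \<Longrightarrow> moment_form (U *v x) (U *v y) (U *v z) = moment_form x y z"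
  by (simp add: moment_form_def braket_unitary)

lemma outcome_corr_mult: "outcome_corr (W ** U) x y z = outcome_corr W (U *v x) (U *v y) (U *v z)"
  by (simp add: outcome_corr_def matrix_vector_mul_assoc)

lemma continuous_on_outcome_corr_left_mult:
  "continuous_on UNIV (\<lambda>U. outcome_corr (W ** U) x y z)"
  unfolding outcome_corr_def corr_term_def matrix_vector_mult_def matrix_matrix_mult_def
  by (intro continuous_intros)

lemma integral_outcome_corr:
  fixes x y z :: "complex^'d::finite"
  assumes H: "haar_unitary \<mu>"
  shows "(\<integral>U. outcome_corr U x y z \<partial>\<mu>) = moment_form x y z / (2 * (real CARD('d) + 1))"
proof -
  define F where "F U = outcome_corr U x y z" for U
  define T where "T a b U = (if a = b then 0 else
      F (hadamard a b ** U) + F (hadamard_phase a b ** U) - 2 * F U)" for a b U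
  have cont: "continuous_on UNIV (\<lambda>U. F (W ** U))" for W :: "complex^'d^'d"
    unfolding F_def by (rule continuous_on_outcome_corr_left_mult)
  have "continuous_on UNIV F"
    using cont[of "mat 1"] by simp
  then have F_borel: "F \<in> borel_measurable borel"
    by (rule borel_measurable_continuous_onI)
  have int_F: "integrable \<mu> (\<lambda>U. F (W ** U))" for W :: "complex^'d^'d"
    by (rule integrable_haar_continuous[OF H cont])
  have int_F1: "integrable \<mu> F"
    using int_F[of "mat 1"] by simp
  have int_T: "integrable \<mu> (T a b)" for a b
    unfolding T_def
    by (cases "a = b") (auto intro!: integrable_diff int_F int_F1)
  have integral_T: "(\<integral>U. T a b U \<partial>\<mu>) = 0" for a b
  proof (cases "a = b")
    case False
    then show ?thesis
      by (simp add: T_def int_F int_F1 integral_haar_left_mult[OF H _ F_borel] hadamard_unitary hadamard_phase_unitary)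
  qed (simp add: T_def)
  have pointwise: "moment_form x y z = 2 * (real CARD('d) + 1) * F U + (\<Sum>a\<in>UNIV. \<Sum>b\<in>UNIV. T a b U)"
    if "U \<in> unitary_group" for U
    using moment_form_eq_two_level_sum[of "U *v x" "U *v y" "U *v z"] outcome_corr_mult[of "mat 1" U x y z]
    by (simp add: moment_form_unitary[OF that] F_def T_def outcome_corr_mult cong: if_cong)
  have P: "prob_space \<mu>" and space: "space \<mu> = unitary_group"
    using H by (simp_all add: haar_unitary_def)
  have "moment_form x y z = (\<integral>U. moment_form x y z \<partial>\<mu>)"
    using P by (simp add: prob_space.prob_space)
  also have "\<dots> = (\<integral>U. 2 * (real CARD('d) + 1) * F U + (\<Sum>a\<in>UNIV. \<Sum>b\<in>UNIV. T a b U) \<partial>\<mu>)"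
    using pointwise by (intro Bochner_Integration.integral_cong) (auto simp: space)
  also have "\<dots> = 2 * (real CARD('d) + 1) * (\<integral>U. F U \<partial>\<mu>)"
    by (simp add: int_F1 int_T integrable_sum integral_sum integral_T)
  finally show ?thesis
    by (simp add: F_def field_simps)
qed

section \<open>Derivatives of outcome probabilities\<close>

lemma has_real_derivative_inner_self:
  assumes "(f has_vector_derivative f') (at t)"
  shows "((\<lambda>t. inner (f t) (f t)) has_real_derivative 2 * inner (f t) f') (at t)"
  using assms unfolding has_real_derivative_iff_has_vector_derivative has_vector_derivative_def
  by (auto intro!: derivative_eq_intros simp: algebra_simps inner_commute)

lemma partial_eqI:
  assumes "((\<lambda>t. g (x + t *\<^sub>R axis i 1)) has_real_derivative D) (at 0)"
  shows "partial i g x = D"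
  using assms unfolding partial_def
  by (simp add: has_real_derivative_iff_has_vector_derivative vector_derivative_at)

lemma has_vector_derivative_partial:
  assumes "smooth_map \<phi>"
  shows "((\<lambda>t. \<phi> (x + t *\<^sub>R axis i 1)) has_vector_derivative partial i \<phi> x) (at 0)"
proof -
  have "(\<lambda>t. iter_partial [] \<phi> (x + t *\<^sub>R axis i 1)) differentiable (at 0)"
    using assms unfolding smooth_map_def by blast
  then show ?thesis
    unfolding partial_def by (simp add: vector_derivative_works)
qed

lemma outcome_prob_eq_inner:
  "outcome_prob \<phi> U s \<theta> = inner ((U *v \<phi> \<theta>) $ s) ((U *v \<phi> \<theta>) $ s)"
proof -
  have "basis_proj s *v w = (\<chi> k. if k = s then w $ s else 0)" for w
    by (simp add: vec_eq_iff basis_proj_def matrix_vector_mult_def if_distrib[of "\<lambda>x. x * _"] cong: if_cong)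
  then have "braket w (basis_proj s *v w) = cnj (w $ s) * w $ s" for w
    by (simp add: braket_def if_distrib[of "\<lambda>x. _ * x"] cong: if_cong)
  moreover have "braket (\<phi> \<theta>) ((cadj U ** basis_proj s ** U) *v \<phi> \<theta>)
      = braket (U *v \<phi> \<theta>) (basis_proj s *v (U *v \<phi> \<theta>))"
    by (simp add: braket_adj matrix_vector_mul_assoc flip: matrix_mul_assoc)
  ultimately show ?thesis
    by (simp add: outcome_prob_def inner_complex_def)
qed

lemma partial_outcome_prob:
  assumes "smooth_map \<phi>"
  shows "partial i (outcome_prob \<phi> U s) \<theta>
    = 2 * Re (cnj ((U *v \<phi> \<theta>) $ s) * (U *v partial i \<phi> \<theta>) $ s)"
proof (rule partial_eqI)
  have "bounded_linear (\<lambda>v. (U *v v) $ s)"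
    by (intro bounded_linear_compose[OF bounded_linear_vec_nth] matrix_vector_mul_bounded_linear)
  from bounded_linear.has_vector_derivative[OF this has_vector_derivative_partial[OF assms]]
  have "((\<lambda>t. (U *v \<phi> (\<theta> + t *\<^sub>R axis i 1)) $ s) has_vector_derivative (U *v partial i \<phi> \<theta>) $ s) (at 0)" .
  from has_real_derivative_inner_self[OF this]
  show "((\<lambda>t. outcome_prob \<phi> U s (\<theta> + t *\<^sub>R axis i 1)) has_real_derivative
      2 * Re (cnj ((U *v \<phi> \<theta>) $ s) * (U *v partial i \<phi> \<theta>) $ s)) (at 0)"
    by (simp add: outcome_prob_eq_inner inner_complex_def)
qed

lemma Re_braket_partial_self:
  assumes "smooth_map \<phi>" and "\<forall>\<theta>. norm (\<phi> \<theta>) = 1"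
  shows "Re (braket (\<phi> \<theta>) (partial i \<phi> \<theta>)) = 0"
proof -
  have "((\<lambda>t. inner (\<phi> (\<theta> + t *\<^sub>R axis i 1)) (\<phi> (\<theta> + t *\<^sub>R axis i 1))) has_real_derivative
      2 * inner (\<phi> \<theta>) (partial i \<phi> \<theta>)) (at 0)"
    using has_real_derivative_inner_self[OF has_vector_derivative_partial[OF assms(1)]] by simp
  moreover have "(\<lambda>t. inner (\<phi> (\<theta> + t *\<^sub>R axis i 1)) (\<phi> (\<theta> + t *\<^sub>R axis i 1))) = (\<lambda>t. 1)"
    using assms(2) by (simp flip: power2_norm_eq_inner)
  ultimately have "2 * inner (\<phi> \<theta>) (partial i \<phi> \<theta>) = 0"
    using DERIV_unique DERIV_const by metis
  then show ?thesis
    by (simp add: Re_braket)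
qed

lemma moment_form_normalized:
  assumes "braket x x = 1" "Re (braket x a) = 0" "Re (braket x b) = 0"
  shows "moment_form x a b = Re (braket a b - braket a x * braket x b)"
  using assms
  by (simp add: moment_form_def flip: cnj_braket[of x a] cnj_braket[of x b] cnj_braket[of a b])

lemma qfim_eq_moment_form:
  assumes "smooth_map \<phi>" and "\<forall>\<theta>. norm (\<phi> \<theta>) = 1"
  shows "qfim \<phi> \<theta> i j = 4 * moment_form (\<phi> \<theta>) (partial i \<phi> \<theta>) (partial j \<phi> \<theta>)"
  using assms by (simp add: qfim_def moment_form_normalized braket_self Re_braket_partial_self)

lemma sum_integral_partial_outcome_prob:
  assumes "smooth_map \<phi>" and "haar_unitary \<mu>"
  shows "(\<Sum>s\<in>UNIV. \<integral>U. partial i (outcome_prob \<phi> U s) \<theta> * partial j (outcome_prob \<phi> U s) \<theta> \<partial>\<mu>)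
    = 4 * (\<integral>U. outcome_corr U (\<phi> \<theta>) (partial i \<phi> \<theta>) (partial j \<phi> \<theta>) \<partial>\<mu>)"
proof -
  let ?c = "\<lambda>U s. corr_term ((U *v \<phi> \<theta>) $ s) ((U *v partial i \<phi> \<theta>) $ s) ((U *v partial j \<phi> \<theta>) $ s)"
  have "partial i (outcome_prob \<phi> U s) \<theta> * partial j (outcome_prob \<phi> U s) \<theta> = 4 * ?c U s" for U s
    by (simp add: partial_outcome_prob[OF assms(1)] corr_term_def algebra_simps)
  moreover have "integrable \<mu> (\<lambda>U. ?c U s)" for s
    by (rule integrable_haar_continuous[OF assms(2)])
      (unfold corr_term_def matrix_vector_mult_def, intro continuous_intros)
  ultimately show ?thesis
    by (simp add: outcome_corr_def integral_sum sum_distrib_left)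
qed

theorem theorem1:
  fixes n :: nat
    and \<phi> :: "real^'m::finite \<Rightarrow> complex^'d::finite"
    and \<mu> :: "(complex^'d^'d) measure"
  assumes "n \<ge> 1"
    and "CARD('d) = 2 ^ n"
    and "smooth_map \<phi>"
    and "\<forall>\<theta>. norm (\<phi> \<theta>) = 1"
    and "haar_unitary \<mu>"
  shows "\<forall>\<theta> i j. qfim \<phi> \<theta> i j =
    2 * (2 ^ n + 1) * (\<Sum>s\<in>UNIV.
       integral\<^sup>L \<mu> (\<lambda>U. partial i (outcome_prob \<phi> U s) \<theta> * partial j (outcome_prob \<phi> U s) \<theta>))"
proof (intro allI)
  fix \<theta> i j
  have pos: "(2::real) * (2 ^ n + 1) > 0"
    by (simp add: add_pos_pos)
  have "(\<Sum>s\<in>UNIV. \<integral>U. partial i (outcome_prob \<phi> U s) \<theta> * partial j (outcome_prob \<phi> U s) \<theta> \<partial>\<mu>)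
      = 4 * (\<integral>U. outcome_corr U (\<phi> \<theta>) (partial i \<phi> \<theta>) (partial j \<phi> \<theta>) \<partial>\<mu>)"
    by (rule sum_integral_partial_outcome_prob[OF assms(3,5)])
  also have "\<dots> = 4 * moment_form (\<phi> \<theta>) (partial i \<phi> \<theta>) (partial j \<phi> \<theta>) / (2 * (2 ^ n + 1))"
    using assms(2) by (simp add: integral_outcome_corr[OF assms(5)])
  also have "\<dots> = qfim \<phi> \<theta> i j / (2 * (2 ^ n + 1))"
    by (simp add: qfim_eq_moment_form[OF assms(3,4)])
  finally show "qfim \<phi> \<theta> i j = 2 * (2 ^ n + 1) * (\<Sum>s\<in>UNIV.
       \<integral>U. partial i (outcome_prob \<phi> U s) \<theta> * partial j (outcome_prob \<phi> U s) \<theta> \<partial>\<mu>)"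
    using pos by (simp add: field_simps)
qed

end
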